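(* Fix $\varepsilon>0$. Let $S,S'\subset\mathbb{R}^n$ be finite sets and $h\colon S\to\mathbb{R}^n$, $h'\colon S'\to\mathbb{R}^n$ maps, and let $M^h$, $M^{h'}$ be the $\mathbb{R}$-persistence modules obtained from the grid filtrations $\{F_r\}$, $\{F'_r\}$ of $h$ and $h'$ at scale $\varepsilon$. If $d_H(\operatorname{Gr}(h),\operatorname{Gr}(h'))\le\varepsilon$, where $d_H$ is the Hausdorff distance induced by the $L^\infty$ metric $d_\infty$ on $\mathbb{R}^n\times\mathbb{R}^n$, then $d_I(M^h,M^{h'})\le\varepsilon$.
   Context: Fix a field $K$; $H$ is homology (fixed degree) with coefficients in $K$. $d_\infty((x_i),(y_i))=\max_i|x_i-y_i|$ on $\mathbb{R}^n$ and on $\mathbb{R}^n\times\mathbb{R}^n=\mathbb{R}^{2n}$. The $\varepsilon$-grid consists of the cubes $[a_1\varepsilon,(a_1+1)\varepsilon]\times\dots\times[a_n\varepsilon,(a_n+1)\varepsilon]$, $a_i\in\mathbb{Z}$. For $h\colon S\to\mathbb{R}^n$ with $\operatorname{Gr}(h)=\{(s,h(s)):s\in S\}$, let $F^h_\varepsilon$ be the union of all products $X'\times Y'$ of grid cubes with $(X'\times Y')\cap\operatorname{Gr}(h)\ne\emptyset$. For integers $i\ge1$ let $F_{i\varepsilon}:=\{z\in\mathbb{R}^{2n}: d_\infty(z,F^h_\varepsilon)\le i\varepsilon\}$, and for $r\in\mathbb{R}$ set $F_r:=\emptyset$ if $r<\varepsilon$ and $F_r:=F_{i\varepsilon}$ if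 $i\varepsilon\le r<(i+1)\varepsilon$. With $p,q\colon\mathbb{R}^n\times\mathbb{R}^n\to\mathbb{R}^n$ the two projections, each $r$ gives a diagram $p(F_r)\leftarrow F_r\rightarrow q(F_r)$; applying $H$ gives a representation $V_r$ of the quiver $1\leftarrow2\rightarrow3$, and inclusions give morphisms $V_s\to V_r$ for $s\le r$. Interval representations $\mathbb{I}[b,d]$ ($1\le b\le d\le3$) have $K$ at vertices $b,\dots,d$, $0$ elsewhere, identity maps between copies of $K$, zero otherwise. Choosing isomorphisms $\eta_r\colon V_r\to\bigoplus\mathbb{I}[b,d]^{m^r_{b,d}}$, the transition maps are $\pi_r\circ\eta_r\circ(V_s\to V_r)\circ\eta_s^{-1}\circ\iota_s\colon\mathbb{I}[1,3]^{m^s_{1,3}}\to\mathbb{I}[1,3]^{m^r_{1,3}}$ ($\iota_s$ summand inclusion, $\pi_r$ summand projection), identified with linear maps $K^{m^s_{1,3}}\to K^{m^r_{1,3}}$; $M^h$ is $r\mapsto K^{m^r_{1,3}}$ with these maps (well defined up to isomorphism). An $\mathbb{R}$-persistence module is a functor from $(\mathbb{R},\le)$ to finite-dimensional $K$-vector spaces with transition maps $\varphi_M(s,t)$; $M(\delta)_t:=M_{t+\delta}$; $\varphi_M(\delta)_t:=\varphi_M(t,t+\delta)$. $M,N$ are $\delta$-interleaved if there are morphisms $f\colon M\to N(\delta)$, $g\colon N\to M(\delta)$ with $g(\delta)f=\varphi_M(2\delta)$, $f(\delta)g=\varphi_N(2\delta)$; $d_I(M,N)$ is the infimum of such $\delta$.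 *)

theory Defs
  imports "HOL-Homology.Homology" "HOL-Library.Extended_Real"
begin

text \<open>Singular K-chains of degree p in a space X: finitely supported functions from
singular p-simplices (in the sense of HOL-Homology) to the field K.\<close>

type_synonym ('a, 'k) kchain = "((nat \<Rightarrow> real) \<Rightarrow> 'a) \<Rightarrow> 'k"

definition kchain :: "nat \<Rightarrow> 'a topology \<Rightarrow> ('a, 'k::field) kchain \<Rightarrow> bool" where
  "kchain p X c \<longleftrightarrow> finite {f. c f \<noteq> 0} \<and> (\<forall>f. c f \<noteq> 0 \<longrightarrow> singular_simplex p X f)"

text \<open>Boundary operator (same formula as HOL-Homology's chain_boundary, K coefficients).\<close>
definition kboundary :: "nat \<Rightarrow> ('a, 'k::field) kchain \<Rightarrow> ('a, 'k) kchain" where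
  "kboundary p c = (\<lambda>g. if p = 0 then 0 else
      (\<Sum>f\<in>{f. c f \<noteq> 0}. \<Sum>k\<le>p. if singular_face p k f = g then (-1) ^ k * c f else 0))"

definition kcycles :: "nat \<Rightarrow> 'a topology \<Rightarrow> ('a, 'k::field) kchain set" where
  "kcycles p X = {c. kchain p X c \<and> kboundary p c = (\<lambda>_. 0)}"

definition kbounds :: "nat \<Rightarrow> 'a topology \<Rightarrow> ('a, 'k::field) kchain set" where
  "kbounds p X = {kboundary (Suc p) c | c. kchain (Suc p) X c}"

definition kchain_map :: "nat \<Rightarrow> ('a \<Rightarrow> 'b) \<Rightarrow> ('a, 'k::field) kchain \<Rightarrow> ('b, 'k) kchain" where
  "kchain_map p g c = (\<lambda>f'. \<Sum>f\<in>{f. c f \<noteq> 0 \<and> simplex_map p g f = f'}. c f)"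

text \<open>K^m, represented as functions nat => K vanishing from index m on.\<close>
definition Kvec :: "nat \<Rightarrow> (nat \<Rightarrow> 'k::field) set" where
  "Kvec m = {x. \<forall>i\<ge>m. x i = 0}"

definition klinear :: "nat \<Rightarrow> nat \<Rightarrow> ((nat \<Rightarrow> 'k::field) \<Rightarrow> (nat \<Rightarrow> 'k)) \<Rightarrow> bool" where
  "klinear a b f \<longleftrightarrow> (\<forall>x\<in>Kvec a. f x \<in> Kvec b)
     \<and> (\<forall>x\<in>Kvec a. \<forall>y\<in>Kvec a. f (\<lambda>i. x i + y i) = (\<lambda>i. f x i + f y i))
     \<and> (\<forall>c. \<forall>x\<in>Kvec a. f (\<lambda>i. c * x i) = (\<lambda>i. c * f x i))"

text \<open>The intervals [b,d], 1 <= b <= d <= 3, of the quiver 1 <- 2 -> 3.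
An element of the direct sum of interval modules (with multiplicities m) at vertex v is a
function assigning to each pair (b,d) a vector of K^(m(b,d)) if v lies in [b,d], and 0 otherwise.\<close>
definition in_interval :: "nat \<Rightarrow> nat \<times> nat \<Rightarrow> bool" where
  "in_interval v bd \<longleftrightarrow> 1 \<le> fst bd \<and> fst bd \<le> v \<and> v \<le> snd bd \<and> snd bd \<le> 3"

definition intdim :: "(nat \<times> nat \<Rightarrow> nat) \<Rightarrow> nat \<Rightarrow> nat \<times> nat \<Rightarrow> nat" where
  "intdim m v bd = (if in_interval v bd then m bd else 0)"

definition DSum :: "(nat \<times> nat \<Rightarrow> nat) \<Rightarrow> nat \<Rightarrow> (nat \<times> nat \<Rightarrow> nat \<Rightarrow> 'k::field) set" where
  "DSum m v = {x. \<forall>bd. x bd \<in> Kvec (intdim m v bd)}"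

definition intmap :: "nat \<Rightarrow> nat \<Rightarrow> (nat \<times> nat \<Rightarrow> nat \<Rightarrow> 'k::field) \<Rightarrow> (nat \<times> nat \<Rightarrow> nat \<Rightarrow> 'k)" where
  "intmap v w x = (\<lambda>bd i. if in_interval v bd \<and> in_interval w bd then x bd i else 0)"

definition summand13 :: "(nat \<Rightarrow> 'k::field) \<Rightarrow> (nat \<times> nat \<Rightarrow> nat \<Rightarrow> 'k)" where
  "summand13 x = (\<lambda>bd. if bd = (1, 3) then x else (\<lambda>_. 0))"

text \<open>phi is (induced by) a linear isomorphism H_p(X;K) = Z_p/B_p --> W:
phi is linear on the cycles, maps them onto W, and its kernel on cycles is B_p.\<close>
definition homology_iso ::
  "nat \<Rightarrow> 'a topology \<Rightarrow> (nat \<times> nat \<Rightarrow> nat \<Rightarrow> 'k::field) set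
     \<Rightarrow> (('a, 'k) kchain \<Rightarrow> (nat \<times> nat \<Rightarrow> nat \<Rightarrow> 'k)) \<Rightarrow> bool" where
  "homology_iso p X W \<phi> \<longleftrightarrow>
     (\<forall>a\<in>kcycles p X. \<forall>b\<in>kcycles p X. \<phi> (\<lambda>f. a f + b f) = (\<lambda>bd i. \<phi> a bd i + \<phi> b bd i))
   \<and> (\<forall>c. \<forall>a\<in>kcycles p X. \<phi> (\<lambda>f. c * a f) = (\<lambda>bd i. c * \<phi> a bd i))
   \<and> \<phi> ` kcycles p X = W
   \<and> (\<forall>a\<in>kcycles p X. \<phi> a = (\<lambda>_ _. 0) \<longleftrightarrow> a \<in> kbounds p X)"

text \<open>An isomorphism eta of the representation H_p(P) <- H_p(F) -> H_p(Q) (maps induced by the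
two projections) with the direct sum of interval modules with multiplicities m.\<close>
definition quiver_decomp ::
  "nat \<Rightarrow> ('a::topological_space \<times> 'a) set \<Rightarrow> (nat \<times> nat \<Rightarrow> nat)
    \<Rightarrow> (('a, 'k::field) kchain \<Rightarrow> (nat \<times> nat \<Rightarrow> nat \<Rightarrow> 'k))
    \<Rightarrow> (('a \<times> 'a, 'k) kchain \<Rightarrow> (nat \<times> nat \<Rightarrow> nat \<Rightarrow> 'k))
    \<Rightarrow> (('a, 'k) kchain \<Rightarrow> (nat \<times> nat \<Rightarrow> nat \<Rightarrow> 'k)) \<Rightarrow> bool" where
  "quiver_decomp p F m \<eta>1 \<eta>2 \<eta>3 \<longleftrightarrow>
     homology_iso p (subtopology euclidean (fst ` F)) (DSum m 1) \<eta>1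
   \<and> homology_iso p (subtopology euclidean F) (DSum m 2) \<eta>2
   \<and> homology_iso p (subtopology euclidean (snd ` F)) (DSum m 3) \<eta>3
   \<and> (\<forall>z\<in>kcycles p (subtopology euclidean F). \<eta>1 (kchain_map p fst z) = intmap 2 1 (\<eta>2 z))
   \<and> (\<forall>z\<in>kcycles p (subtopology euclidean F). \<eta>3 (kchain_map p snd z) = intmap 2 3 (\<eta>2 z))"

definition linf_dist :: "real^'n \<Rightarrow> real^'n \<Rightarrow> real" where
  "linf_dist x y = Max (range (\<lambda>i. \<bar>x $ i - y $ i\<bar>))"

definition linf_dist2 :: "((real^'n) \<times> (real^'n)) \<Rightarrow> ((real^'n) \<times> (real^'n)) \<Rightarrow> real" where
  "linf_dist2 z w = max (linf_dist (fst z) (fst w)) (linf_dist (snd z) (snd w))"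

definition hausdorff_linf :: "((real^'n) \<times> (real^'n)) set \<Rightarrow> ((real^'n) \<times> (real^'n)) set \<Rightarrow> ereal" where
  "hausdorff_linf A B = max (SUP a\<in>A. INF b\<in>B. ereal (linf_dist2 a b))
                            (SUP b\<in>B. INF a\<in>A. ereal (linf_dist2 a b))"

definition graph_of :: "(real^'n) set \<Rightarrow> (real^'n \<Rightarrow> real^'n) \<Rightarrow> ((real^'n) \<times> (real^'n)) set" where
  "graph_of S h = {(s, h s) | s. s \<in> S}"

definition grid_cube :: "real \<Rightarrow> ('n \<Rightarrow> int) \<Rightarrow> (real^'n) set" where
  "grid_cube \<epsilon> a = {x. \<forall>i. real_of_int (a i) * \<epsilon> \<le> x $ i \<and> x $ i \<le> (real_of_int (a i) + 1) * \<epsilon>}"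

definition grid_cover :: "real \<Rightarrow> (real^'n) set \<Rightarrow> (real^'n \<Rightarrow> real^'n) \<Rightarrow> ((real^'n) \<times> (real^'n)) set" where
  "grid_cover \<epsilon> S h = \<Union> {grid_cube \<epsilon> a \<times> grid_cube \<epsilon> b | a b.
                               (grid_cube \<epsilon> a \<times> grid_cube \<epsilon> b) \<inter> graph_of S h \<noteq> {}}"

definition grid_thick :: "real \<Rightarrow> (real^'n) set \<Rightarrow> (real^'n \<Rightarrow> real^'n) \<Rightarrow> nat \<Rightarrow> ((real^'n) \<times> (real^'n)) set" where
  "grid_thick \<epsilon> S h i = {z. (INF w\<in>grid_cover \<epsilon> S h. ereal (linf_dist2 z w)) \<le> ereal (real i * \<epsilon>)}"

definition grid_filt :: "real \<Rightarrow> (real^'n) set \<Rightarrow> (real^'n \<Rightarrow> real^'n) \<Rightarrow> real \<Rightarrow> ((real^'n) \<times> (real^'n)) set" where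
  "grid_filt \<epsilon> S h r = (if r < \<epsilon> then {} else grid_thick \<epsilon> S h (nat \<lfloor>r / \<epsilon>\<rfloor>))"

type_synonym 'k pmod = "(real \<Rightarrow> nat) \<times> (real \<Rightarrow> real \<Rightarrow> (nat \<Rightarrow> 'k) \<Rightarrow> (nat \<Rightarrow> 'k))"

definition is_Mh :: "real \<Rightarrow> (real^'n) set \<Rightarrow> (real^'n \<Rightarrow> real^'n) \<Rightarrow> nat \<Rightarrow> 'k::field pmod \<Rightarrow> bool" where
  "is_Mh \<epsilon> S h p M \<longleftrightarrow>
    (\<exists>m \<eta>1 \<eta>2 \<eta>3.
       (\<forall>r. quiver_decomp p (grid_filt \<epsilon> S h r) (m r) (\<eta>1 r) (\<eta>2 r) (\<eta>3 r))
     \<and> (\<forall>r. fst M r = m r (1, 3))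
     \<and> (\<forall>s r. s \<le> r \<longrightarrow> klinear (fst M s) (fst M r) (snd M s r)
          \<and> (\<forall>x\<in>Kvec (fst M s). \<forall>z\<in>kcycles p (subtopology euclidean (grid_filt \<epsilon> S h s)).
                \<eta>2 s z = summand13 x \<longrightarrow> snd M s r x = \<eta>2 r z (1, 3))))"

definition pmod_morph :: "real \<Rightarrow> 'k::field pmod \<Rightarrow> 'k pmod \<Rightarrow> (real \<Rightarrow> (nat \<Rightarrow> 'k) \<Rightarrow> (nat \<Rightarrow> 'k)) \<Rightarrow> bool" where
  "pmod_morph \<delta> M N f \<longleftrightarrow>
     (\<forall>t. klinear (fst M t) (fst N (t + \<delta>)) (f t))
   \<and> (\<forall>s t. s \<le> t \<longrightarrow> (\<forall>x\<in>Kvec (fst M s). snd N (s + \<delta>) (t + \<delta>) (f s x) = f t (snd M s t x)))"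

definition interleaved :: "real \<Rightarrow> 'k::field pmod \<Rightarrow> 'k pmod \<Rightarrow> bool" where
  "interleaved \<delta> M N \<longleftrightarrow> (\<exists>f g. pmod_morph \<delta> M N f \<and> pmod_morph \<delta> N M g
     \<and> (\<forall>t. \<forall>x\<in>Kvec (fst M t). g (t + \<delta>) (f t x) = snd M t (t + 2 * \<delta>) x)
     \<and> (\<forall>t. \<forall>x\<in>Kvec (fst N t). f (t + \<delta>) (g t x) = snd N t (t + 2 * \<delta>) x))"

definition interleaving_dist :: "'k::field pmod \<Rightarrow> 'k pmod \<Rightarrow> ereal" where
  "interleaving_dist M N = (INF \<delta>\<in>{\<delta>. 0 \<le> \<delta> \<and> interleaved \<delta> M N}. ereal \<delta>)"

end

theory Submission
  imports Defs
begin

text \<open>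
  If the graphs are \<epsilon>-close, every point of a grid cell meeting one graph lies within \<epsilon> of a
  cell meeting the other, so F_t \<subseteq> F'_(t+\<epsilon>) and F'_t \<subseteq> F_(t+\<epsilon>). These inclusions induce maps between the
  zigzags p(F_r) \<leftarrow> F_r \<rightarrow> q(F_r), and the point is that they respect I[1,3]-coordinates: a class
  at the middle vertex with vanishing I[1,3]-coordinate is, up to a boundary, a sum of classes in
  summands I[1,2], I[2,2] and I[2,3], each of which dies under one of the two projections and hence
  keeps a vanishing I[1,3]-coordinate after any further inclusion. So the inclusions induce
  morphisms M^h \<rightarrow> M^h'(\<epsilon>) and back whose composites are the structure maps of shift 2\<epsilon>.
\<close>

lemma kboundary_eq_sum_over:
  assumes "finite T" "{f. c f \<noteq> 0} \<subseteq> T" "p \<noteq> 0"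
  shows "kboundary p c g = (\<Sum>f\<in>T. \<Sum>k\<le>p. if singular_face p k f = g then (-1) ^ k * c f else 0)"
  unfolding kboundary_def using assms
  by (auto intro!: sum.mono_neutral_left sum.neutral split: if_splits)

lemma kchain_map_eq_sum_over:
  assumes "finite T" "{f. c f \<noteq> 0} \<subseteq> T"
  shows "kchain_map q g c g' = (\<Sum>f\<in>T. if simplex_map q g f = g' then c f else 0)"
  unfolding kchain_map_def sum.If_cases[OF assms(1)] using assms
  by (auto intro!: sum.mono_neutral_left)

lemma kchain_map_support:
  "{g'. kchain_map q g c g' \<noteq> 0} \<subseteq> simplex_map q g ` {f. c f \<noteq> 0}"
  by (auto simp: kchain_map_def elim!: sum.not_neutral_contains_not_neutral)

lemma kboundary_support:
  "{h. kboundary p c h \<noteq> 0} \<subseteq> (\<lambda>(f, k). singular_face p k f) ` ({f. c f \<noteq> 0} \<times> {..p})"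
  by (fastforce simp: kboundary_def elim!: sum.not_neutral_contains_not_neutral split: if_splits)

lemma sum_over_fibres:
  assumes "finite X" "finite Y" "\<psi> ` X \<subseteq> Y"
  shows "(\<Sum>y\<in>Y. \<Sum>x\<in>X. if \<psi> x = y then F x else 0) = (\<Sum>x\<in>X. F x)"
  using assms by (subst sum.swap) (auto intro!: sum.cong simp: sum.delta)

lemma kchain_map_kboundary_eq_sum:
  assumes fin: "finite {f. c f \<noteq> 0}" and p: "p \<noteq> 0"
  shows "kchain_map (p - 1) g (kboundary p c) g' =
    (\<Sum>f\<in>{f. c f \<noteq> 0}. \<Sum>k\<le>p.
       if simplex_map (p - 1) g (singular_face p k f) = g' then (-1) ^ k * c f else 0)"
    (is "_ = (\<Sum>f\<in>?C. \<Sum>k\<le>p. ?F f k)")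
proof -
  let ?X = "?C \<times> {..p}" and ?face = "\<lambda>(f, k). singular_face p k f"
  have finX: "finite ?X" using fin by simp
  have "kchain_map (p - 1) g (kboundary p c) g' =
      (\<Sum>h\<in>?face ` ?X. if simplex_map (p - 1) g h = g' then kboundary p c h else 0)"
    using finX kboundary_support by (intro kchain_map_eq_sum_over) auto
  also have "\<dots> = (\<Sum>h\<in>?face ` ?X. \<Sum>x\<in>?X. if ?face x = h then case_prod ?F x else 0)"
  proof (rule sum.cong[OF refl])
    fix h
    show "(if simplex_map (p - 1) g h = g' then kboundary p c h else 0) =
        (\<Sum>x\<in>?X. if ?face x = h then case_prod ?F x else 0)"
      using p by (auto simp: kboundary_def sum.cartesian_product intro!: sum.cong sum.neutral)
  qed
  also have "\<dots> = (\<Sum>x\<in>?X. case_prod ?F x)"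
    using finX by (intro sum_over_fibres) auto
  finally show ?thesis by (simp add: sum.cartesian_product)
qed

lemma kboundary_kchain_map_eq_sum:
  assumes fin: "finite {f. c f \<noteq> 0}" and p: "p \<noteq> 0"
  shows "kboundary p (kchain_map p g c) g' =
    (\<Sum>f\<in>{f. c f \<noteq> 0}. \<Sum>k\<le>p.
       if singular_face p k (simplex_map p g f) = g' then (-1) ^ k * c f else 0)"
    (is "_ = (\<Sum>f\<in>?C. ?F f)")
proof -
  let ?Y = "simplex_map p g ` ?C"
  have "kboundary p (kchain_map p g c) g' =
      (\<Sum>f'\<in>?Y. \<Sum>k\<le>p. if singular_face p k f' = g' then (-1) ^ k * kchain_map p g c f' else 0)"
    using fin p kchain_map_support[of p g c] by (intro kboundary_eq_sum_over) auto
  also have "\<dots> = (\<Sum>f'\<in>?Y. \<Sum>f\<in>?C. if simplex_map p g f = f' then ?F f else 0)"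
  proof (rule sum.cong[OF refl])
    fix f'
    have "(\<Sum>k\<le>p. if singular_face p k f' = g' then (-1) ^ k * kchain_map p g c f' else 0) =
        (\<Sum>k\<le>p. \<Sum>f\<in>?C. if simplex_map p g f = f' then
           (if singular_face p k (simplex_map p g f) = g' then (-1) ^ k * c f else 0) else 0)"
      by (auto simp: kchain_map_eq_sum_over[OF fin order_refl] sum_distrib_left
          intro!: sum.cong sum.neutral)
    also have "\<dots> = (\<Sum>f\<in>?C. if simplex_map p g f = f' then ?F f else 0)"
      by (subst sum.swap) (auto intro!: sum.cong)
    finally show "(\<Sum>k\<le>p. if singular_face p k f' = g' then (-1) ^ k * kchain_map p g c f' else 0) =
        (\<Sum>f\<in>?C. if simplex_map p g f = f' then ?F f else 0)" .
  qed
  also have "\<dots> = (\<Sum>f\<in>?C. ?F f)"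
    using fin by (intro sum_over_fibres) auto
  finally show ?thesis .
qed

lemma singular_face_simplex_map_commute:
  assumes "1 \<le> p" "k \<le> p"
  shows "singular_face p k (simplex_map p g f) = simplex_map (p - 1) g (singular_face p k f)"
  using assms simplical_face_in_standard_simplex[OF assms]
  by (auto simp: singular_face_simplex_map singular_face_def simplex_map_def fun_eq_iff)

lemma kboundary_kchain_map:
  assumes "finite {f. c f \<noteq> 0}"
  shows "kboundary p (kchain_map p g c) = kchain_map (p - 1) g (kboundary p c)"
proof (cases "p = 0")
  case True
  then show ?thesis by (simp add: kboundary_def kchain_map_def fun_eq_iff)
next
  case False
  show ?thesis
  proof
    fix g'
    show "kboundary p (kchain_map p g c) g' = kchain_map (p - 1) g (kboundary p c) g'"
      unfolding kboundary_kchain_map_eq_sum[OF assms False]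
        kchain_map_kboundary_eq_sum[OF assms False]
      using False by (intro sum.cong refl) (simp add: singular_face_simplex_map_commute)
  qed
qed

lemma kchain_finite: "kchain p X c \<Longrightarrow> finite {f. c f \<noteq> 0}"
  by (simp add: kchain_def)

lemma kchain_kchain_map:
  assumes "continuous_map X Y g" "kchain p X c"
  shows "kchain p Y (kchain_map p g c)"
  using assms kchain_map_support[of p g c]
  unfolding kchain_def by (blast intro: singular_simplex_simplex_map finite_subset)

lemma kcycles_kchain_map:
  assumes "continuous_map X Y g" "z \<in> kcycles p X"
  shows "kchain_map p g z \<in> kcycles p Y"
proof -
  have z: "kchain p X z" "kboundary p z = (\<lambda>_. 0)"
    using assms(2) by (auto simp: kcycles_def)
  have "kboundary p (kchain_map p g z) = kchain_map (p - 1) g (\<lambda>_. 0)"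
    using kboundary_kchain_map[OF kchain_finite[OF z(1)], of p g] z(2) by simp
  then show ?thesis
    using kchain_kchain_map[OF assms(1) z(1)] by (simp add: kcycles_def kchain_map_def)
qed

lemma kboundary_add:
  assumes "finite {f. a f \<noteq> 0}" "finite {f. b f \<noteq> 0}"
  shows "kboundary p (\<lambda>f. a f + b f) = (\<lambda>g. kboundary p a g + kboundary p b g)"
proof (cases "p = 0")
  case False
  let ?T = "{f. a f \<noteq> 0} \<union> {f. b f \<noteq> 0}"
  have T: "finite ?T" using assms by simp
  have supports: "{f. a f + b f \<noteq> 0} \<subseteq> ?T" "{f. a f \<noteq> 0} \<subseteq> ?T" "{f. b f \<noteq> 0} \<subseteq> ?T"
    by auto
  show ?thesis
  proof
    fix g
    show "kboundary p (\<lambda>f. a f + b f) g = kboundary p a g + kboundary p b g"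
      by (simp add: kboundary_eq_sum_over[OF T supports(1) False]
          kboundary_eq_sum_over[OF T supports(2) False] kboundary_eq_sum_over[OF T supports(3) False]
          sum.distrib[symmetric] distrib_left if_distrib cong: if_cong)
  qed
qed (simp add: kboundary_def)

lemma kboundary_scale:
  assumes "finite {f. a f \<noteq> 0}"
  shows "kboundary p (\<lambda>f. c * a f) = (\<lambda>g. c * kboundary p a g)"
proof (cases "p = 0")
  case False
  have support: "{f. c * a f \<noteq> 0} \<subseteq> {f. a f \<noteq> 0}" by auto
  show ?thesis
  proof
    fix g
    show "kboundary p (\<lambda>f. c * a f) g = c * kboundary p a g"
      by (simp add: kboundary_eq_sum_over[OF assms support False]
          kboundary_eq_sum_over[OF assms order_refl False] sum_distrib_left if_distrib
          mult.left_commute cong: if_cong)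
  qed
qed (simp add: kboundary_def)

lemma kchain_add:
  assumes "kchain p X a" "kchain p X b"
  shows "kchain p X (\<lambda>f. a f + b f)"
proof -
  have support: "{f. a f + b f \<noteq> 0} \<subseteq> {f. a f \<noteq> 0} \<union> {f. b f \<noteq> 0}" by auto
  then have "finite {f. a f + b f \<noteq> 0}"
    using assms by (simp add: kchain_def finite_subset)
  moreover have "singular_simplex p X f" if "a f + b f \<noteq> 0" for f
    using that support assms by (auto simp: kchain_def)
  ultimately show ?thesis by (simp add: kchain_def)
qed

lemma kchain_scale: "kchain p X a \<Longrightarrow> kchain p X (\<lambda>f. c * a f)"
  unfolding kchain_def by (auto intro: finite_subset[of _ "{f. a f \<noteq> 0}"])

lemma kcycles_add: "a \<in> kcycles p X \<Longrightarrow> b \<in> kcycles p X \<Longrightarrow> (\<lambda>f. a f + b f) \<in> kcycles p X"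
  unfolding kcycles_def using kchain_add kboundary_add kchain_finite by fastforce

lemma kcycles_scale: "a \<in> kcycles p X \<Longrightarrow> (\<lambda>f. c * a f) \<in> kcycles p X"
  unfolding kcycles_def using kchain_scale kboundary_scale kchain_finite by fastforce

lemma kcycles_diff: "a \<in> kcycles p X \<Longrightarrow> b \<in> kcycles p X \<Longrightarrow> (\<lambda>f. a f - b f) \<in> kcycles p X"
  using kcycles_add[OF _ kcycles_scale[of b p X "-1"], of a] by simp

lemma kchain_subtopology_mono:
  "A \<subseteq> B \<Longrightarrow> kchain p (top_of_set A) c \<Longrightarrow> kchain p (top_of_set B) c"
  unfolding kchain_def by (auto simp: singular_simplex_subtopology)

lemma kcycles_subtopology_mono:
  "A \<subseteq> B \<Longrightarrow> kcycles p (top_of_set A) \<subseteq> kcycles p (top_of_set B)"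
  unfolding kcycles_def using kchain_subtopology_mono by blast

lemma kbounds_subtopology_mono:
  "A \<subseteq> B \<Longrightarrow> kbounds p (top_of_set A) \<subseteq> kbounds p (top_of_set B)"
  unfolding kbounds_def using kchain_subtopology_mono by blast

lemma homology_iso_add:
  "homology_iso p X W \<phi> \<Longrightarrow> a \<in> kcycles p X \<Longrightarrow> b \<in> kcycles p X \<Longrightarrow>
    \<phi> (\<lambda>f. a f + b f) = (\<lambda>bd i. \<phi> a bd i + \<phi> b bd i)"
  by (simp add: homology_iso_def)

lemma homology_iso_scale:
  "homology_iso p X W \<phi> \<Longrightarrow> a \<in> kcycles p X \<Longrightarrow> \<phi> (\<lambda>f. c * a f) = (\<lambda>bd i. c * \<phi> a bd i)"
  by (simp add: homology_iso_def)

lemma homology_iso_diff: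
  assumes "homology_iso p X W \<phi>" "a \<in> kcycles p X" "b \<in> kcycles p X"
  shows "\<phi> (\<lambda>f. a f - b f) = (\<lambda>bd i. \<phi> a bd i - \<phi> b bd i)"
  using homology_iso_add[OF assms(1,2) kcycles_scale[OF assms(3), of "-1"]]
    homology_iso_scale[OF assms(1,3), of "-1"]
  by simp

lemma homology_iso_in_range: "homology_iso p X W \<phi> \<Longrightarrow> a \<in> kcycles p X \<Longrightarrow> \<phi> a \<in> W"
  by (auto simp: homology_iso_def)

lemma homology_iso_surj: "homology_iso p X W \<phi> \<Longrightarrow> v \<in> W \<Longrightarrow> \<exists>a\<in>kcycles p X. \<phi> a = v"
  by (auto simp: homology_iso_def)

lemma homology_iso_eq_zero_iff:
  "homology_iso p X W \<phi> \<Longrightarrow> a \<in> kcycles p X \<Longrightarrow> \<phi> a = (\<lambda>_ _. 0) \<longleftrightarrow> a \<in> kbounds p X"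
  by (auto simp: homology_iso_def)

lemma homology_iso_zero_mono:
  assumes "homology_iso p (top_of_set A) W \<phi>" "homology_iso p (top_of_set B) W' \<phi>'"
    and "A \<subseteq> B" "a \<in> kcycles p (top_of_set A)" "\<phi> a = (\<lambda>_ _. 0)"
  shows "\<phi>' a = (\<lambda>_ _. 0)"
proof -
  have "a \<in> kbounds p (top_of_set A)" using assms homology_iso_eq_zero_iff by blast
  then have "a \<in> kbounds p (top_of_set B)" using kbounds_subtopology_mono[OF assms(3)] by blast
  moreover have "a \<in> kcycles p (top_of_set B)"
    using kcycles_subtopology_mono[OF assms(3)] assms(4) by blast
  ultimately show ?thesis using homology_iso_eq_zero_iff[OF assms(2)] by blast
qed

lemma continuous_map_top_of_set_image:
  "continuous_on UNIV \<pi> \<Longrightarrow> continuous_map (top_of_set A) (top_of_set (\<pi> ` A)) \<pi>"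
  by (auto simp: continuous_map_in_subtopology intro: continuous_on_subset)

lemma homology_iso_zero_mono_image:
  assumes "homology_iso p (top_of_set (\<pi> ` A)) W \<phi>" "homology_iso p (top_of_set (\<pi> ` B)) W' \<phi>'"
    and "continuous_on UNIV \<pi>" "A \<subseteq> B" "w \<in> kcycles p (top_of_set A)"
    and "\<phi> (kchain_map p \<pi> w) = (\<lambda>_ _. 0)"
  shows "\<phi>' (kchain_map p \<pi> w) = (\<lambda>_ _. 0)"
proof -
  have "kchain_map p \<pi> w \<in> kcycles p (top_of_set (\<pi> ` A))"
    by (rule kcycles_kchain_map[OF continuous_map_top_of_set_image[OF assms(3)] assms(5)])
  then show ?thesis
    by (rule homology_iso_zero_mono[OF assms(1,2) image_mono[OF assms(4)] _ assms(6)])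
qed

lemma quiver_decomp_summand13_vanishes:
  assumes QA: "quiver_decomp p A m e1 e2 e3" and QB: "quiver_decomp p B m' e1' e2' e3'"
    and AB: "A \<subseteq> B" and w: "w \<in> kcycles p (top_of_set A)"
    and v: "v = 1 \<or> v = 3" and w0: "intmap 2 v (e2 w) = (\<lambda>_ _. (0::'k::field))"
  shows "e2' w (1, 3) = (\<lambda>_. 0)"
proof -
  have wB: "w \<in> kcycles p (top_of_set B)" using kcycles_subtopology_mono[OF AB] w by blast
  have "intmap 2 v (e2' w) = (\<lambda>_ _. 0)"
    using v
  proof
    assume "v = 1"
    then have "e1 (kchain_map p fst w) = (\<lambda>_ _. 0)" using QA w w0 by (simp add: quiver_decomp_def)
    moreover have "homology_iso p (top_of_set (fst ` A)) (DSum m 1) e1"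
      and "homology_iso p (top_of_set (fst ` B)) (DSum m' 1) e1'"
      using QA QB by (simp_all add: quiver_decomp_def)
    ultimately have "e1' (kchain_map p fst w) = (\<lambda>_ _. 0)"
      using homology_iso_zero_mono_image[OF _ _ continuous_on_fst[OF continuous_on_id] AB w]
      by blast
    then show ?thesis using QB wB \<open>v = 1\<close> by (simp add: quiver_decomp_def)
  next
    assume "v = 3"
    then have "e3 (kchain_map p snd w) = (\<lambda>_ _. 0)" using QA w w0 by (simp add: quiver_decomp_def)
    moreover have "homology_iso p (top_of_set (snd ` A)) (DSum m 3) e3"
      and "homology_iso p (top_of_set (snd ` B)) (DSum m' 3) e3'"
      using QA QB by (simp_all add: quiver_decomp_def)
    ultimately have "e3' (kchain_map p snd w) = (\<lambda>_ _. 0)"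
      using homology_iso_zero_mono_image[OF _ _ continuous_on_snd[OF continuous_on_id] AB w]
      by blast
    then show ?thesis using QB wB \<open>v = 3\<close> by (simp add: quiver_decomp_def)
  qed
  then have "intmap 2 v (e2' w) (1, 3) i = 0" for i by simp
  then show ?thesis using v by (auto simp: intmap_def in_interval_def fun_eq_iff)
qed

lemma in_interval_2_cases:
  "in_interval 2 bd \<longleftrightarrow> bd = (1, 2) \<or> bd = (1, 3) \<or> bd = (2, 2) \<or> bd = (2, 3)"
  by (cases bd) (auto simp: in_interval_def)

lemma DSum_single:
  "v \<in> DSum m k \<Longrightarrow> (\<lambda>b. if b = bd then v bd else (\<lambda>_. 0)) \<in> DSum m k"
  by (auto simp: DSum_def Kvec_def)

lemma DSum_2_outside:
  "v \<in> DSum m 2 \<Longrightarrow> \<not> in_interval 2 bd \<Longrightarrow> v bd = (\<lambda>_. 0)"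
  by (cases bd) (auto simp: DSum_def Kvec_def intdim_def)

lemma quiver_decomp_summand13_zero_mono:
  assumes QA: "quiver_decomp p A m e1 e2 e3" and QB: "quiver_decomp p B m' e1' e2' e3'"
    and AB: "A \<subseteq> B" and z: "z \<in> kcycles p (top_of_set A)"
    and z0: "e2 z (1, 3) = (\<lambda>_. (0::'k::field))"
  shows "e2' z (1, 3) = (\<lambda>_. 0)"
proof -
  have hA: "homology_iso p (top_of_set A) (DSum m 2) e2"
    and hB: "homology_iso p (top_of_set B) (DSum m' 2) e2'"
    using QA QB by (simp_all add: quiver_decomp_def)
  have cyB: "x \<in> kcycles p (top_of_set B)" if "x \<in> kcycles p (top_of_set A)" for x
    using kcycles_subtopology_mono[OF AB] that by blast
  define v where "v = e2 z"
  have v: "v \<in> DSum m 2" unfolding v_def by (rule homology_iso_in_range[OF hA z])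
  define single where "single bd = (\<lambda>b. if b = bd then v bd else (\<lambda>_. 0))" for bd
  obtain zz where zz: "\<And>bd. zz bd \<in> kcycles p (top_of_set A)" "\<And>bd. e2 (zz bd) = single bd"
    using homology_iso_surj[OF hA DSum_single[OF v]] unfolding single_def by metis
  define r where "r = (\<lambda>f. z f - zz (1, 2) f - zz (2, 2) f - zz (2, 3) f)"
  have r: "r \<in> kcycles p (top_of_set A)"
    unfolding r_def by (intro kcycles_diff z zz)
  have "e2 r = (\<lambda>bd i. v bd i - single (1, 2) bd i - single (2, 2) bd i - single (2, 3) bd i)"
    unfolding r_def v_def using z zz
    by (simp add: homology_iso_diff[OF hA] kcycles_diff)
  also have "\<dots> = (\<lambda>_ _. 0)"
  proof (intro ext)
    fix bd i
    show "v bd i - single (1, 2) bd i - single (2, 2) bd i - single (2, 3) bd i = 0"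
      using z0 DSum_2_outside[OF v, of bd]
      by (cases "in_interval 2 bd") (auto simp: v_def single_def in_interval_2_cases)
  qed
  finally have r0: "e2' r = (\<lambda>_ _. 0)"
    using hA hB AB r by (blast intro: homology_iso_zero_mono)
  have r_expand: "e2' r = (\<lambda>bd i. e2' z bd i - e2' (zz (1, 2)) bd i - e2' (zz (2, 2)) bd i
      - e2' (zz (2, 3)) bd i)"
    unfolding r_def using cyB[OF z] cyB[OF zz(1)]
    by (simp add: homology_iso_diff[OF hB] kcycles_diff)
  have vanish: "e2' (zz bd) (1, 3) = (\<lambda>_. 0)" if "bd \<in> {(1, 2), (2, 2), (2, 3)}" for bd
    using that zz
    by (intro quiver_decomp_summand13_vanishes[OF QA QB AB, of _ "if bd = (2, 3) then 1 else 3"])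
      (auto simp: single_def intmap_def in_interval_def fun_eq_iff)
  have "e2' z (1, 3) i = 0" for i
    using fun_cong[OF fun_cong[OF r0, of "(1, 3)"], of i] vanish[of "(1, 2)"] vanish[of "(2, 2)"]
      vanish[of "(2, 3)"]
    by (simp add: r_expand)
  then show ?thesis by (simp add: fun_eq_iff)
qed

lemma quiver_decomp_summand13_eq_mono:
  assumes QA: "quiver_decomp p A m e1 e2 e3" and QB: "quiver_decomp p B m' e1' e2' e3'"
    and AB: "A \<subseteq> B" and z: "z \<in> kcycles p (top_of_set A)" "z' \<in> kcycles p (top_of_set A)"
    and eq: "e2 z (1, 3) = (e2 z' (1, 3) :: nat \<Rightarrow> 'k::field)"
  shows "e2' z (1, 3) = e2' z' (1, 3)"
proof -
  have hA: "homology_iso p (top_of_set A) (DSum m 2) e2"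
    and hB: "homology_iso p (top_of_set B) (DSum m' 2) e2'"
    using QA QB by (simp_all add: quiver_decomp_def)
  have zB: "z \<in> kcycles p (top_of_set B)" "z' \<in> kcycles p (top_of_set B)"
    using kcycles_subtopology_mono[OF AB] z by blast+
  have "e2 (\<lambda>f. z f - z' f) (1, 3) = (\<lambda>_. 0)"
    using eq by (simp add: homology_iso_diff[OF hA z])
  then have "e2' (\<lambda>f. z f - z' f) (1, 3) = (\<lambda>_. 0)"
    by (rule quiver_decomp_summand13_zero_mono[OF QA QB AB kcycles_diff[OF z]])
  then show ?thesis by (simp add: homology_iso_diff[OF hB zB] fun_eq_iff)
qed

definition is_summand13_module ::
  "nat \<Rightarrow> (real \<Rightarrow> ('a::topological_space \<times> 'a) set) \<Rightarrow> (real \<Rightarrow> nat \<times> nat \<Rightarrow> nat)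
    \<Rightarrow> (real \<Rightarrow> ('a, 'k::field) kchain \<Rightarrow> (nat \<times> nat \<Rightarrow> nat \<Rightarrow> 'k))
    \<Rightarrow> (real \<Rightarrow> ('a \<times> 'a, 'k) kchain \<Rightarrow> (nat \<times> nat \<Rightarrow> nat \<Rightarrow> 'k))
    \<Rightarrow> (real \<Rightarrow> ('a, 'k) kchain \<Rightarrow> (nat \<times> nat \<Rightarrow> nat \<Rightarrow> 'k)) \<Rightarrow> 'k pmod \<Rightarrow> bool" where
  "is_summand13_module p F m e1 e2 e3 M \<longleftrightarrow>
    (\<forall>r. quiver_decomp p (F r) (m r) (e1 r) (e2 r) (e3 r))
     \<and> (\<forall>r. fst M r = m r (1, 3))
     \<and> (\<forall>s r. s \<le> r \<longrightarrow> klinear (fst M s) (fst M r) (snd M s r)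
          \<and> (\<forall>x\<in>Kvec (fst M s). \<forall>z\<in>kcycles p (subtopology euclidean (F s)).
                e2 s z = summand13 x \<longrightarrow> snd M s r x = e2 r z (1, 3)))"

lemma is_Mh_iff_is_summand13_module:
  "is_Mh \<epsilon> S h p M \<longleftrightarrow> (\<exists>m e1 e2 e3. is_summand13_module p (grid_filt \<epsilon> S h) m e1 e2 e3 M)"
  unfolding is_Mh_def is_summand13_module_def ..

text \<open>A cycle representing x in the I[1,3]-summand at level t (SOME is only meaningful for
  x in K^(dim M_t)).\<close>
definition summand13_lift ::
  "nat \<Rightarrow> (real \<Rightarrow> ('a::topological_space \<times> 'a) set)
    \<Rightarrow> (real \<Rightarrow> ('a \<times> 'a, 'k::field) kchain \<Rightarrow> (nat \<times> nat \<Rightarrow> nat \<Rightarrow> 'k))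
    \<Rightarrow> real \<Rightarrow> (nat \<Rightarrow> 'k) \<Rightarrow> ('a \<times> 'a, 'k) kchain" where
  "summand13_lift p F e2 t x = (SOME z. z \<in> kcycles p (top_of_set (F t)) \<and> e2 t z = summand13 x)"

text \<open>The map M_t \<rightarrow> N_(t+\<delta>) induced by an inclusion F_t \<subseteq> G_(t+\<delta>), read off on
  I[1,3]-coordinates.\<close>
definition induced_map ::
  "nat \<Rightarrow> real \<Rightarrow> (real \<Rightarrow> ('a::topological_space \<times> 'a) set)
    \<Rightarrow> (real \<Rightarrow> ('a \<times> 'a, 'k::field) kchain \<Rightarrow> (nat \<times> nat \<Rightarrow> nat \<Rightarrow> 'k))
    \<Rightarrow> (real \<Rightarrow> ('a \<times> 'a, 'k) kchain \<Rightarrow> (nat \<times> nat \<Rightarrow> nat \<Rightarrow> 'k))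
    \<Rightarrow> real \<Rightarrow> (nat \<Rightarrow> 'k) \<Rightarrow> (nat \<Rightarrow> 'k)" where
  "induced_map p \<delta> F e2 d2 t x = d2 (t + \<delta>) (summand13_lift p F e2 t x) (1, 3)"

context
  fixes p F m e1 e2 e3 M
  assumes module: "is_summand13_module p F m e1 e2 e3 M"
begin

lemma summand13_module_quiver_decomp: "quiver_decomp p (F r) (m r) (e1 r) (e2 r) (e3 r)"
  using module by (simp add: is_summand13_module_def)

lemma summand13_module_homology_iso: "homology_iso p (top_of_set (F r)) (DSum (m r) 2) (e2 r)"
  using summand13_module_quiver_decomp by (simp add: quiver_decomp_def)

lemma summand13_module_Kvec:
  "z \<in> kcycles p (top_of_set (F t)) \<Longrightarrow> e2 t z (1, 3) \<in> Kvec (fst M t)"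
proof -
  assume "z \<in> kcycles p (top_of_set (F t))"
  then have "e2 t z \<in> DSum (m t) 2"
    by (rule homology_iso_in_range[OF summand13_module_homology_iso])
  then have "e2 t z (1, 3) \<in> Kvec (intdim (m t) 2 (1, 3))"
    by (simp add: DSum_def)
  moreover have "intdim (m t) 2 (1, 3) = fst M t"
    using module by (simp add: is_summand13_module_def intdim_def in_interval_def)
  ultimately show ?thesis by simp
qed

lemma summand13_lift:
  assumes "x \<in> Kvec (fst M t)"
  shows "summand13_lift p F e2 t x \<in> kcycles p (top_of_set (F t))"
    and "e2 t (summand13_lift p F e2 t x) = summand13 x"
proof -
  have "summand13 x \<in> DSum (m t) 2"
    using assms module
    by (simp add: is_summand13_module_def summand13_def DSum_def intdim_def in_interval_def
        Kvec_def)
  then have "\<exists>z. z \<in> kcycles p (top_of_set (F t)) \<and> e2 t z = summand13 x"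
    using homology_iso_surj[OF summand13_module_homology_iso] by blast
  then show "summand13_lift p F e2 t x \<in> kcycles p (top_of_set (F t))"
    and "e2 t (summand13_lift p F e2 t x) = summand13 x"
    unfolding summand13_lift_def by (metis (mono_tags, lifting) someI_ex)+
qed

lemma summand13_module_transition:
  assumes mono: "\<And>s t. s \<le> t \<Longrightarrow> F s \<subseteq> F t"
    and st: "s \<le> t" and z: "z \<in> kcycles p (top_of_set (F s))"
  shows "snd M s t (e2 s z (1, 3)) = e2 t z (1, 3)"
proof -
  let ?x = "e2 s z (1, 3)"
  let ?w = "summand13_lift p F e2 s ?x"
  have x: "?x \<in> Kvec (fst M s)" by (rule summand13_module_Kvec[OF z])
  have "snd M s t ?x = e2 t ?w (1, 3)"
    using module st x summand13_lift[OF x] by (simp add: is_summand13_module_def)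
  also have "\<dots> = e2 t z (1, 3)"
    using summand13_lift[OF x] z
    by (intro quiver_decomp_summand13_eq_mono[OF summand13_module_quiver_decomp
          summand13_module_quiver_decomp mono[OF st]]) (simp_all add: summand13_def)
  finally show ?thesis .
qed

end

context
  fixes p F m e1 e2 e3 G n d1 d2 d3 \<delta> and M N :: "'k::field pmod"
  assumes M: "is_summand13_module p F m e1 e2 e3 M"
    and N: "is_summand13_module p G n d1 d2 d3 N"
    and FG: "\<And>t. F t \<subseteq> G (t + \<delta>)"
begin

lemma induced_map_cycle:
  assumes z: "z \<in> kcycles p (top_of_set (F t))"
  shows "induced_map p \<delta> F e2 d2 t (e2 t z (1, 3)) = d2 (t + \<delta>) z (1, 3)"
proof -
  have x: "e2 t z (1, 3) \<in> Kvec (fst M t)" by (rule summand13_module_Kvec[OF M z])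
  show ?thesis
    unfolding induced_map_def using summand13_lift[OF M x] z
    by (intro quiver_decomp_summand13_eq_mono[OF summand13_module_quiver_decomp[OF M]
          summand13_module_quiver_decomp[OF N] FG]) (simp_all add: summand13_def)
qed

lemma induced_map_klinear: "klinear (fst M t) (fst N (t + \<delta>)) (induced_map p \<delta> F e2 d2 t)"
proof -
  let ?lift = "summand13_lift p F e2 t"
  have lift: "?lift x \<in> kcycles p (top_of_set (F t))" "e2 t (?lift x) (1, 3) = x"
    if "x \<in> Kvec (fst M t)" for x
    using summand13_lift[OF M that] by (simp_all add: summand13_def)
  have liftG: "?lift x \<in> kcycles p (top_of_set (G (t + \<delta>)))" if "x \<in> Kvec (fst M t)" for x
    using kcycles_subtopology_mono[OF FG] lift(1)[OF that] by blast
  note hF = summand13_module_homology_iso[OF M] and hG = summand13_module_homology_iso[OF N]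
  show ?thesis
    unfolding klinear_def
  proof (intro conjI ballI allI)
    fix x :: "nat \<Rightarrow> 'k" assume x: "x \<in> Kvec (fst M t)"
    show "induced_map p \<delta> F e2 d2 t x \<in> Kvec (fst N (t + \<delta>))"
      unfolding induced_map_def by (rule summand13_module_Kvec[OF N liftG[OF x]])
  next
    fix x y :: "nat \<Rightarrow> 'k" assume x: "x \<in> Kvec (fst M t)" and y: "y \<in> Kvec (fst M t)"
    have "(\<lambda>i. x i + y i) = e2 t (\<lambda>f. ?lift x f + ?lift y f) (1, 3)"
      using lift[OF x] lift[OF y] by (simp add: homology_iso_add[OF hF])
    then have "induced_map p \<delta> F e2 d2 t (\<lambda>i. x i + y i) =
        d2 (t + \<delta>) (\<lambda>f. ?lift x f + ?lift y f) (1, 3)"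
      using induced_map_cycle[OF kcycles_add[OF lift(1)[OF x] lift(1)[OF y]]] by simp
    then show "induced_map p \<delta> F e2 d2 t (\<lambda>i. x i + y i) =
        (\<lambda>i. induced_map p \<delta> F e2 d2 t x i + induced_map p \<delta> F e2 d2 t y i)"
      using liftG[OF x] liftG[OF y] by (simp add: homology_iso_add[OF hG] induced_map_def)
  next
    fix c :: 'k and x :: "nat \<Rightarrow> 'k" assume x: "x \<in> Kvec (fst M t)"
    have "(\<lambda>i. c * x i) = e2 t (\<lambda>f. c * ?lift x f) (1, 3)"
      using lift[OF x] by (simp add: homology_iso_scale[OF hF])
    then have "induced_map p \<delta> F e2 d2 t (\<lambda>i. c * x i) = d2 (t + \<delta>) (\<lambda>f. c * ?lift x f) (1, 3)"
      using induced_map_cycle[OF kcycles_scale[OF lift(1)[OF x]]] by simp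
    then show "induced_map p \<delta> F e2 d2 t (\<lambda>i. c * x i) = (\<lambda>i. c * induced_map p \<delta> F e2 d2 t x i)"
      using liftG[OF x] by (simp add: homology_iso_scale[OF hG] induced_map_def)
  qed
qed

lemma induced_map_natural:
  assumes monoF: "\<And>s t. s \<le> t \<Longrightarrow> F s \<subseteq> F t" and monoG: "\<And>s t. s \<le> t \<Longrightarrow> G s \<subseteq> G t"
    and "s \<le> t" "x \<in> Kvec (fst M s)"
  shows "snd N (s + \<delta>) (t + \<delta>) (induced_map p \<delta> F e2 d2 s x) =
    induced_map p \<delta> F e2 d2 t (snd M s t x)"
proof -
  let ?z = "summand13_lift p F e2 s x"
  have z: "?z \<in> kcycles p (top_of_set (F s))" and x_eq: "e2 s ?z (1, 3) = x"
    using summand13_lift[OF M assms(4)] by (simp_all add: summand13_def)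
  have zF: "?z \<in> kcycles p (top_of_set (F t))" and zG: "?z \<in> kcycles p (top_of_set (G (s + \<delta>)))"
    using z kcycles_subtopology_mono[OF monoF[OF assms(3)]] kcycles_subtopology_mono[OF FG]
    by blast+
  have "snd N (s + \<delta>) (t + \<delta>) (induced_map p \<delta> F e2 d2 s x) = d2 (t + \<delta>) ?z (1, 3)"
    unfolding induced_map_def
    by (rule summand13_module_transition[OF N monoG add_right_mono[OF assms(3)] zG])
  also have "\<dots> = induced_map p \<delta> F e2 d2 t (e2 t ?z (1, 3))"
    by (rule induced_map_cycle[OF zF, symmetric])
  also have "e2 t ?z (1, 3) = snd M s t x"
    using summand13_module_transition[OF M monoF assms(3) z] x_eq by simp
  finally show ?thesis .
qed

lemma induced_map_pmod_morph:
  assumes "\<And>s t. s \<le> t \<Longrightarrow> F s \<subseteq> F t" "\<And>s t. s \<le> t \<Longrightarrow> G s \<subseteq> G t"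
  shows "pmod_morph \<delta> M N (induced_map p \<delta> F e2 d2)"
  unfolding pmod_morph_def using induced_map_klinear induced_map_natural[OF assms] by blast

end

lemma induced_map_comp:
  assumes M: "is_summand13_module p F m e1 e2 e3 M" and N: "is_summand13_module p G n d1 d2 d3 N"
    and monoF: "\<And>s t. s \<le> t \<Longrightarrow> F s \<subseteq> F t"
    and FG: "\<And>t. F t \<subseteq> G (t + \<delta>)" and GF: "\<And>t. G t \<subseteq> F (t + \<delta>)" and "0 \<le> \<delta>"
    and x: "x \<in> Kvec (fst M t)"
  shows "induced_map p \<delta> G d2 e2 (t + \<delta>) (induced_map p \<delta> F e2 d2 t x) = snd M t (t + 2 * \<delta>) x"
proof -
  let ?z = "summand13_lift p F e2 t x"
  have z: "?z \<in> kcycles p (top_of_set (F t))" and x_eq: "e2 t ?z (1, 3) = x"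
    using summand13_lift[OF M x] by (simp_all add: summand13_def)
  have zG: "?z \<in> kcycles p (top_of_set (G (t + \<delta>)))"
    using z kcycles_subtopology_mono[OF FG] by blast
  have "induced_map p \<delta> G d2 e2 (t + \<delta>) (induced_map p \<delta> F e2 d2 t x) = e2 (t + \<delta> + \<delta>) ?z (1, 3)"
    unfolding induced_map_def[of _ _ F] by (rule induced_map_cycle[OF N M GF zG])
  also have "\<dots> = snd M t (t + 2 * \<delta>) x"
    using summand13_module_transition[OF M monoF _ z, of "t + 2 * \<delta>"] x_eq \<open>0 \<le> \<delta>\<close>
    by (simp add: algebra_simps)
  finally show ?thesis .
qed

lemma interleaved_if_shifted_inclusions:
  assumes M: "is_summand13_module p F m e1 e2 e3 M" and N: "is_summand13_module p G n d1 d2 d3 N"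
    and monoF: "\<And>s t. s \<le> t \<Longrightarrow> F s \<subseteq> F t" and monoG: "\<And>s t. s \<le> t \<Longrightarrow> G s \<subseteq> G t"
    and FG: "\<And>t. F t \<subseteq> G (t + \<delta>)" and GF: "\<And>t. G t \<subseteq> F (t + \<delta>)" and "0 \<le> \<delta>"
  shows "interleaved \<delta> M N"
  unfolding interleaved_def
  using induced_map_pmod_morph[OF M N FG monoF monoG] induced_map_pmod_morph[OF N M GF monoG monoF]
    induced_map_comp[OF M N monoF FG GF \<open>0 \<le> \<delta>\<close>] induced_map_comp[OF N M monoG GF FG \<open>0 \<le> \<delta>\<close>]
  by blast

lemma finite_INF_ereal_le_imp:
  assumes "finite B" "(INF b\<in>B. ereal (f b)) \<le> ereal c"
  shows "\<exists>b\<in>B. f b \<le> c"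
  using assms by (induction B rule: finite_induct) (auto simp: min_le_iff_disj top_ereal_def)

lemma linf_dist_le_iff: "linf_dist x y \<le> c \<longleftrightarrow> (\<forall>i. \<bar>x $ i - y $ i\<bar> \<le> c)"
  unfolding linf_dist_def by (subst Max_le_iff) auto

lemma component_le_linf_dist: "\<bar>x $ i - y $ i\<bar> \<le> linf_dist x y"
  unfolding linf_dist_def by (rule Max_ge) auto

lemma linf_dist_nonneg: "0 \<le> linf_dist x y"
  using component_le_linf_dist[of x _ y] abs_ge_zero order_trans by blast

lemma linf_dist_triangle: "linf_dist x z \<le> linf_dist x y + linf_dist y z"
  unfolding linf_dist_le_iff[of x z]
proof
  fix i
  have "\<bar>x $ i - z $ i\<bar> \<le> \<bar>x $ i - y $ i\<bar> + \<bar>y $ i - z $ i\<bar>" by simp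
  also have "\<dots> \<le> linf_dist x y + linf_dist y z" by (intro add_mono component_le_linf_dist)
  finally show "\<bar>x $ i - z $ i\<bar> \<le> linf_dist x y + linf_dist y z" .
qed

lemma linf_dist_commute: "linf_dist x y = linf_dist y x"
  unfolding linf_dist_def by (simp add: abs_minus_commute)

lemma linf_dist2_le_iff:
  "linf_dist2 z w \<le> c \<longleftrightarrow> linf_dist (fst z) (fst w) \<le> c \<and> linf_dist (snd z) (snd w) \<le> c"
  by (simp add: linf_dist2_def)

lemma linf_dist2_nonneg: "0 \<le> linf_dist2 z w"
  unfolding linf_dist2_def using linf_dist_nonneg max.coboundedI1 by blast

lemma linf_dist2_triangle: "linf_dist2 x z \<le> linf_dist2 x y + linf_dist2 y z"
  unfolding linf_dist2_def
  using linf_dist_triangle[of "fst x" "fst z" "fst y"]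
    linf_dist_triangle[of "snd x" "snd z" "snd y"]
  by (auto simp: max_def)

lemma linf_dist2_commute: "linf_dist2 z w = linf_dist2 w z"
  unfolding linf_dist2_def by (simp add: linf_dist_commute)

lemma hausdorff_linf_commute: "hausdorff_linf A B = hausdorff_linf B A"
  unfolding hausdorff_linf_def by (simp add: linf_dist2_commute max.commute)

lemma hausdorff_linf_le_imp:
  assumes "finite B" "hausdorff_linf A B \<le> ereal c" "a \<in> A"
  shows "\<exists>b\<in>B. linf_dist2 a b \<le> c"
proof -
  have "(INF b\<in>B. ereal (linf_dist2 a b)) \<le> ereal c"
    using assms(2,3) unfolding hausdorff_linf_def by (simp add: SUP_le_iff)
  then show ?thesis by (rule finite_INF_ereal_le_imp[OF assms(1)])
qed

lemma grid_interval_neighbour: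
  fixes \<epsilon> x y w :: real and a :: int
  assumes "\<epsilon> > 0" "of_int a * \<epsilon> \<le> x" "x \<le> (of_int a + 1) * \<epsilon>"
    and "of_int a * \<epsilon> \<le> w" "w \<le> (of_int a + 1) * \<epsilon>" "\<bar>x - y\<bar> \<le> \<epsilon>"
  shows "\<exists>(k::int) w'. of_int k * \<epsilon> \<le> y \<and> y \<le> (of_int k + 1) * \<epsilon>
    \<and> of_int k * \<epsilon> \<le> w' \<and> w' \<le> (of_int k + 1) * \<epsilon> \<and> \<bar>w - w'\<bar> \<le> \<epsilon>"
proof -
  consider "y < of_int a * \<epsilon>" | "(of_int a + 1) * \<epsilon> < y"
    | "of_int a * \<epsilon> \<le> y" "y \<le> (of_int a + 1) * \<epsilon>"
    by linarith
  then show ?thesis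
  proof cases
    case 1
    then show ?thesis
      using assms by (intro exI[of _ "a - 1"] exI[of _ "of_int a * \<epsilon>"]) (auto simp: algebra_simps)
  next
    case 2
    then show ?thesis
      using assms by (intro exI[of _ "a + 1"] exI[of _ "(of_int a + 1) * \<epsilon>"])
        (auto simp: algebra_simps)
  next
    case 3
    then show ?thesis using assms by (intro exI[of _ a] exI[of _ w]) (auto simp: algebra_simps)
  qed
qed

lemma grid_cube_neighbour:
  assumes "\<epsilon> > 0" "x \<in> grid_cube \<epsilon> a" "w \<in> grid_cube \<epsilon> a" "linf_dist x y \<le> \<epsilon>"
  shows "\<exists>a' w'. y \<in> grid_cube \<epsilon> a' \<and> w' \<in> grid_cube \<epsilon> a' \<and> linf_dist w w' \<le> \<epsilon>"
proof -
  have "\<exists>(k::int) w'. of_int k * \<epsilon> \<le> y $ i \<and> y $ i \<le> (of_int k + 1) * \<epsilon>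
      \<and> of_int k * \<epsilon> \<le> w' \<and> w' \<le> (of_int k + 1) * \<epsilon> \<and> \<bar>w $ i - w'\<bar> \<le> \<epsilon>" for i
    using assms component_le_linf_dist[of x i y]
    by (intro grid_interval_neighbour[of \<epsilon> "a i" "x $ i"]) (auto simp: grid_cube_def)
  then obtain k w' where kw: "\<And>i. of_int (k i) * \<epsilon> \<le> y $ i \<and> y $ i \<le> (of_int (k i) + 1) * \<epsilon>
      \<and> of_int (k i) * \<epsilon> \<le> w' i \<and> w' i \<le> (of_int (k i) + 1) * \<epsilon> \<and> \<bar>w $ i - w' i\<bar> \<le> \<epsilon>"
    by metis
  then have "y \<in> grid_cube \<epsilon> k" "(\<chi> i. w' i) \<in> grid_cube \<epsilon> k" "linf_dist w (\<chi> i. w' i) \<le> \<epsilon>"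
    by (auto simp: grid_cube_def linf_dist_le_iff)
  then show ?thesis by blast
qed

text \<open>Moving a graph point by at most \<epsilon> moves its grid cells by at most one step, and every point
  of the old cell is within \<epsilon> of the new one.\<close>
lemma grid_cover_neighbour:
  assumes "\<epsilon> > 0" and close: "\<forall>g\<in>graph_of S h. \<exists>g'\<in>graph_of S' h'. linf_dist2 g g' \<le> \<epsilon>"
    and w: "w \<in> grid_cover \<epsilon> S h"
  shows "\<exists>w'\<in>grid_cover \<epsilon> S' h'. linf_dist2 w w' \<le> \<epsilon>"
proof -
  obtain a b s where w_ab: "w \<in> grid_cube \<epsilon> a \<times> grid_cube \<epsilon> b"
    and s: "s \<in> S" "s \<in> grid_cube \<epsilon> a" "h s \<in> grid_cube \<epsilon> b"
    using w unfolding grid_cover_def graph_of_def by blast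
  then have w_cubes: "fst w \<in> grid_cube \<epsilon> a" "snd w \<in> grid_cube \<epsilon> b" by auto
  obtain s' where s': "s' \<in> S'" "linf_dist s s' \<le> \<epsilon>" "linf_dist (h s) (h' s') \<le> \<epsilon>"
    using close s(1) by (fastforce simp: graph_of_def linf_dist2_le_iff)
  obtain a' w1 where a': "s' \<in> grid_cube \<epsilon> a'" "w1 \<in> grid_cube \<epsilon> a'" "linf_dist (fst w) w1 \<le> \<epsilon>"
    using grid_cube_neighbour[OF assms(1) s(2) w_cubes(1) s'(2)] by blast
  obtain b' w2 where b': "h' s' \<in> grid_cube \<epsilon> b'" "w2 \<in> grid_cube \<epsilon> b'" "linf_dist (snd w) w2 \<le> \<epsilon>"
    using grid_cube_neighbour[OF assms(1) s(3) w_cubes(2) s'(3)] by blast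
  have "(w1, w2) \<in> grid_cover \<epsilon> S' h'"
    unfolding grid_cover_def graph_of_def using a' b' s'(1) by blast
  moreover have "linf_dist2 w (w1, w2) \<le> \<epsilon>" using a' b' by (simp add: linf_dist2_le_iff)
  ultimately show ?thesis by blast
qed

lemma grid_thick_shift:
  assumes "\<epsilon> > 0" and close: "\<forall>g\<in>graph_of S h. \<exists>g'\<in>graph_of S' h'. linf_dist2 g g' \<le> \<epsilon>"
  shows "grid_thick \<epsilon> S h i \<subseteq> grid_thick \<epsilon> S' h' (Suc i)"
proof
  fix z assume "z \<in> grid_thick \<epsilon> S h i"
  let ?C = "grid_cover \<epsilon> S h" and ?C' = "grid_cover \<epsilon> S' h'"
  have D: "(INF w\<in>?C. ereal (linf_dist2 z w)) \<le> ereal (real i * \<epsilon>)"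
    using \<open>z \<in> grid_thick \<epsilon> S h i\<close> by (simp add: grid_thick_def)
  then have "?C \<noteq> {}" by (auto simp: top_ereal_def)
  have "(INF w'\<in>?C'. ereal (linf_dist2 z w')) \<le> ereal (linf_dist2 z w) + ereal \<epsilon>"
    if w: "w \<in> ?C" for w
  proof -
    obtain w' where w': "w' \<in> ?C'" "linf_dist2 w w' \<le> \<epsilon>"
      using grid_cover_neighbour[OF assms w] by blast
    have "(INF w'\<in>?C'. ereal (linf_dist2 z w')) \<le> ereal (linf_dist2 z w')"
      using w'(1) by (rule INF_lower)
    also have "\<dots> \<le> ereal (linf_dist2 z w + \<epsilon>)"
      using linf_dist2_triangle[of z w' w] w'(2) by simp
    finally show ?thesis by simp
  qed
  then have "(INF w'\<in>?C'. ereal (linf_dist2 z w')) \<le> (INF w\<in>?C. ereal (linf_dist2 z w) + ereal \<epsilon>)"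
    by (rule INF_greatest)
  also have "\<dots> = (INF w\<in>?C. ereal (linf_dist2 z w)) + ereal \<epsilon>"
    by (rule INF_ereal_add_left[OF \<open>?C \<noteq> {}\<close>]) (auto simp: linf_dist2_nonneg)
  also have "\<dots> \<le> ereal (real (Suc i) * \<epsilon>)"
    using add_right_mono[OF D, of "ereal \<epsilon>"] by (simp add: algebra_simps)
  finally show "z \<in> grid_thick \<epsilon> S' h' (Suc i)" by (simp add: grid_thick_def)
qed

lemma grid_thick_mono: "i \<le> j \<Longrightarrow> \<epsilon> > 0 \<Longrightarrow> grid_thick \<epsilon> S h i \<subseteq> grid_thick \<epsilon> S h j"
  unfolding grid_thick_def by (auto intro: order_trans simp: mult_right_mono)

lemma grid_filt_mono:
  assumes "\<epsilon> > 0" "s \<le> t"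
  shows "grid_filt \<epsilon> S h s \<subseteq> grid_filt \<epsilon> S h t"
proof -
  have "nat \<lfloor>s / \<epsilon>\<rfloor> \<le> nat \<lfloor>t / \<epsilon>\<rfloor>"
    using assms by (intro nat_mono floor_mono divide_right_mono) auto
  then show ?thesis
    unfolding grid_filt_def using assms grid_thick_mono[OF _ assms(1), of _ _ S h] by auto
qed

lemma grid_filt_shift:
  assumes "\<epsilon> > 0" and close: "\<forall>g\<in>graph_of S h. \<exists>g'\<in>graph_of S' h'. linf_dist2 g g' \<le> \<epsilon>"
  shows "grid_filt \<epsilon> S h t \<subseteq> grid_filt \<epsilon> S' h' (t + \<epsilon>)"
proof (cases "t < \<epsilon>")
  case False
  then have "0 \<le> \<lfloor>t / \<epsilon>\<rfloor>" using assms(1) by simp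
  moreover have "(t + \<epsilon>) / \<epsilon> = t / \<epsilon> + 1" using assms(1) by (simp add: field_simps)
  ultimately have "nat \<lfloor>(t + \<epsilon>) / \<epsilon>\<rfloor> = Suc (nat \<lfloor>t / \<epsilon>\<rfloor>)" by (simp add: nat_add_distrib)
  then show ?thesis using False assms grid_thick_shift by (simp add: grid_filt_def)
qed (simp add: grid_filt_def)

lemma finite_graph_of: "finite S \<Longrightarrow> finite (graph_of S h)"
  unfolding graph_of_def by (simp add: setcompr_eq_image)

lemma interleaving_dist_le: "0 \<le> \<delta> \<Longrightarrow> interleaved \<delta> M N \<Longrightarrow> interleaving_dist M N \<le> ereal \<delta>"
  unfolding interleaving_dist_def by (rule INF_lower) simp

theorem mainTheorem9:
  fixes \<epsilon> :: real
    and S S' :: "(real^'n) set"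
    and h h' :: "real^'n \<Rightarrow> real^'n"
    and p :: nat
    and M M' :: "'k::field pmod"
  assumes "\<epsilon> > 0"
    and "finite S" and "finite S'"
    and "is_Mh \<epsilon> S h p M"
    and "is_Mh \<epsilon> S' h' p M'"
    and "hausdorff_linf (graph_of S h) (graph_of S' h') \<le> ereal \<epsilon>"
  shows "interleaving_dist M M' \<le> ereal \<epsilon>"
proof -
  obtain m e1 e2 e3 where M: "is_summand13_module p (grid_filt \<epsilon> S h) m e1 e2 e3 M"
    using assms(4) by (auto simp: is_Mh_iff_is_summand13_module)
  obtain n d1 d2 d3 where M': "is_summand13_module p (grid_filt \<epsilon> S' h') n d1 d2 d3 M'"
    using assms(5) by (auto simp: is_Mh_iff_is_summand13_module)
  have close: "\<forall>g\<in>graph_of S h. \<exists>g'\<in>graph_of S' h'. linf_dist2 g g' \<le> \<epsilon>"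
    using hausdorff_linf_le_imp[OF finite_graph_of[OF assms(3)] assms(6)] by blast
  have close': "\<forall>g\<in>graph_of S' h'. \<exists>g'\<in>graph_of S h. linf_dist2 g g' \<le> \<epsilon>"
    using hausdorff_linf_le_imp[OF finite_graph_of[OF assms(2)]] assms(6)
    unfolding hausdorff_linf_commute[of "graph_of S h"] by blast
  have "interleaved \<epsilon> M M'"
    by (rule interleaved_if_shifted_inclusions[OF M M' grid_filt_mono[OF assms(1)]
          grid_filt_mono[OF assms(1)] grid_filt_shift[OF assms(1) close]
          grid_filt_shift[OF assms(1) close'] less_imp_le[OF assms(1)]])
  then show ?thesis using assms(1) by (intro interleaving_dist_le) auto
qed

end
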